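(* Let $n\ge3$ and let $\mathfrak q$ be a finite complex Borel measure on $[0,1]$ without atoms at $0$ and $1$ whose distribution function $\mathcal Q(x)=\mathfrak q([0,x])$ is differentiable at $0$ and $1$ with $\mathcal Q'(0)=\mathcal Q'(1)=0$ (the total mass need not vanish). Let $\Xi$ be a bounded function on $\mathbb C$, and let $\Psi\in C^1(\overline{\Gamma^1\cup\Gamma^2}\times[0,1])$ satisfy $\operatorname{Re}\Psi(w,x)\le-c_0\min(x,1-x)$ for some $c_0>0$. Then, for positive functions $R=R(w)$ on $\overline{\Gamma^1\cup\Gamma^2}$ tending to infinity uniformly in $w$, $$\int_{\Gamma^1\cup\Gamma^2}\int_{[0,1]}R\,e^{R\Psi(w,x)}\,\Xi(Rw)\,\mathfrak q(dx)\,dw=o(1).$$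
   Context: $\Gamma^1=\{e^{i\phi}:0<\phi<\pi/n\}$ and $\Gamma^2=\{e^{i\phi}:\pi/n<\phi<2\pi/n\}$ are arcs of the unit circle; the integral in $w$ is the complex line integral along these arcs. *)

theory Defs
  imports "HOL-Complex_Analysis.Complex_Analysis"
begin

text \<open>A finite complex Borel measure q on [0,1] is represented by its polar
decomposition q = h |q|: a finite positive Borel measure M on the reals
concentrated on [0,1] (the total variation) and a Borel density h with norm
at most 1.\<close>

definition cm_integral :: "real measure \<Rightarrow> (real \<Rightarrow> complex) \<Rightarrow> (real \<Rightarrow> complex) \<Rightarrow> complex" where
  "cm_integral M h f = (LINT x|M. f x * h x)"

definition cm_dist :: "real measure \<Rightarrow> (real \<Rightarrow> complex) \<Rightarrow> real \<Rightarrow> complex" where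
  "cm_dist M h y = (LINT x|M. (if x \<in> {0..y} then h x else 0))"

definition cm_point :: "real measure \<Rightarrow> (real \<Rightarrow> complex) \<Rightarrow> real \<Rightarrow> complex" where
  "cm_point M h a = (LINT x|M. (if x = a then h x else 0))"

text \<open>Closed arc: closure of Gamma^1 union Gamma^2.\<close>
definition closed_arc :: "nat \<Rightarrow> complex set" where
  "closed_arc n = {cis \<phi> | \<phi>. 0 \<le> \<phi> \<and> \<phi> \<le> 2 * pi / real n}"

definition C1_on_set :: "('a::real_normed_vector \<Rightarrow> 'b::real_normed_vector) \<Rightarrow> 'a set \<Rightarrow> bool" where
  "C1_on_set f K \<longleftrightarrow> (\<exists>U g D. open U \<and> K \<subseteq> U \<and> (\<forall>z\<in>K. g z = f z) \<and>
      (\<forall>z\<in>U. (g has_derivative blinfun_apply (D z)) (at z)) \<and> continuous_on U D)"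

end

theory Submission
  imports Defs
begin

text \<open>Write \<open>q = h M\<close> and \<open>Q\<close> for its distribution function, and fix \<open>w\<close> with \<open>r = R(w)\<close> large.
  Away from the endpoints \<open>Re \<Psi> \<le> -c\<^sub>0 \<delta>\<close>, so there the integrand \<open>r e\<^bsup>r\<Psi>\<^esup>\<close> is \<open>O(r e\<^bsup>-c\<^sub>0 \<delta> r\<^esup>)\<close>.
  Near an endpoint \<open>e\<close> we integrate by parts against \<open>Q - Q(e)\<close>: the \<open>x\<close>-derivative of the
  integrand is \<open>O(r\<^sup>2 e\<^bsup>-c\<^sub>0 r |x - e|\<^esup>)\<close>, while \<open>Q'(e) = 0\<close> gives \<open>|Q(x) - Q(e)| \<le> \<eta> |x - e|\<close> on a
  \<open>\<delta>\<close>-neighbourhood of \<open>e\<close>, so each boundary layer contributes \<open>O(\<eta> / c\<^sub>0\<^sup>2)\<close> independently of \<open>r\<close>.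
  Hence the inner integral tends to \<open>0\<close> uniformly in \<open>w\<close>; boundedness of \<open>\<Xi>\<close> and the finite
  length of the arcs give the theorem.\<close>

lemma norm_integral_le_integral:
  fixes f :: "'a \<Rightarrow> 'b::{banach,second_countable_topology}"
  assumes "integrable M g" and "\<And>x. x \<in> space M \<Longrightarrow> norm (f x) \<le> g x"
  shows "norm (integral\<^sup>L M f) \<le> integral\<^sup>L M g"
proof (cases "integrable M f")
  case True
  have "norm (integral\<^sup>L M f) \<le> (\<integral>x. norm (f x) \<partial>M)"
    by (rule integral_norm_bound)
  also have "\<dots> \<le> integral\<^sup>L M g"
    using True assms by (intro integral_mono) auto
  finally show ?thesis .
next
  case False
  have "0 \<le> integral\<^sup>L M g"
    using assms by (intro integral_nonneg_AE AE_I2) (auto intro: order_trans[OF norm_ge_zero])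
  with False show ?thesis
    by (simp add: not_integrable_integral_eq)
qed

lemma (in finite_measure) norm_integral_le_measure_mult:
  fixes f :: "'a \<Rightarrow> 'b::{banach,second_countable_topology}"
  assumes "\<And>x. x \<in> space M \<Longrightarrow> norm (f x) \<le> B"
  shows "norm (integral\<^sup>L M f) \<le> measure M (space M) * B"
  using norm_integral_le_integral[of M "\<lambda>_. B" f] assms by (simp add: mult.commute)

lemma lborel_integral_indicator_derivative:
  fixes \<phi> \<phi>' :: "real \<Rightarrow> 'b::euclidean_space"
  assumes "a \<le> b"
    and "\<And>s. s \<in> {a..b} \<Longrightarrow> (\<phi> has_vector_derivative \<phi>' s) (at s within {a..b})"
    and "continuous_on {a..b} \<phi>'"
  shows "(LINT s|lborel. indicator {a..b} s *\<^sub>R \<phi>' s) = \<phi> b - \<phi> a"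
proof -
  have "(LINT s|lborel. indicator {a..b} s *\<^sub>R \<phi>' s) = integral {a..b} \<phi>'"
    using set_borel_integral_eq_integral(2)[OF borel_integrable_atLeastAtMost'[OF assms(3)]]
    by (simp add: set_lebesgue_integral_def)
  also have "\<dots> = \<phi> b - \<phi> a"
    by (rule integral_unique[OF fundamental_theorem_of_calculus[OF assms(1,2)]])
  finally show ?thesis .
qed

lemma lborel_integral_dist_exp_le:
  fixes a u v e :: real
  assumes "0 < a" and "u \<le> v" and "e \<in> {u, v}"
  shows "(LINT s|lborel. indicator {u..v} s *\<^sub>R (\<bar>s - e\<bar> * exp (- a * \<bar>s - e\<bar>))) \<le> 1 / a\<^sup>2"
proof -
  define F where "F s = - ((s - u) / a + 1 / a\<^sup>2) * exp (- a * (s - u))" for s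
  have "(F has_real_derivative (s - u) * exp (- a * (s - u))) (at s)" for s
    unfolding F_def using \<open>0 < a\<close>
    by (auto intro!: derivative_eq_intros simp: field_simps power2_eq_square)
  then have "(LINT s|lborel. indicator {u..v} s *\<^sub>R ((s - u) * exp (- a * (s - u)))) = F v - F u"
    using \<open>u \<le> v\<close> by (intro lborel_integral_indicator_derivative)
      (auto simp: has_real_derivative_iff_has_vector_derivative[symmetric]
        intro!: continuous_intros intro: DERIV_subset)
  also have "\<dots> \<le> 1 / a\<^sup>2"
  proof -
    have "0 \<le> ((v - u) / a + 1 / a\<^sup>2) * exp (- a * (v - u))"
      using \<open>0 < a\<close> \<open>u \<le> v\<close> by simp
    then show ?thesis
      by (simp add: F_def algebra_simps)
  qed
  finally have at_u: "(LINT s|lborel. indicator {u..v} s *\<^sub>R ((s - u) * exp (- a * (s - u)))) \<le> 1 / a\<^sup>2" .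
  consider "e = u" | "e = v"
    using \<open>e \<in> {u, v}\<close> by blast
  then show ?thesis
  proof cases
    case 1
    have "(LINT s|lborel. indicator {u..v} s *\<^sub>R (\<bar>s - e\<bar> * exp (- a * \<bar>s - e\<bar>)))
        = (LINT s|lborel. indicator {u..v} s *\<^sub>R ((s - u) * exp (- a * (s - u))))"
      using 1 by (intro Bochner_Integration.integral_cong) (auto simp: indicator_def)
    with at_u show ?thesis by simp
  next
    case 2
    have "(LINT s|lborel. indicator {u..v} s *\<^sub>R (\<bar>s - e\<bar> * exp (- a * \<bar>s - e\<bar>)))
        = (LINT s|lborel. indicator {u..v} s *\<^sub>R ((s - u) * exp (- a * (s - u))))"
      using 2 by (subst lborel_integral_real_affine[where c = "-1" and t = "u + v"])
        (auto intro!: Bochner_Integration.integral_cong simp: indicator_def)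
    with at_u show ?thesis by simp
  qed
qed

lemma tendsto_mult_exp_neg_at_top:
  fixes c :: real
  assumes "0 < c"
  shows "((\<lambda>r. r * exp (- c * r)) \<longlongrightarrow> 0) at_top"
proof -
  have "filterlim (\<lambda>r. c * r) at_top at_top"
    using \<open>0 < c\<close> by (intro filterlim_tendsto_pos_mult_at_top[OF tendsto_const] filterlim_ident)
  from filterlim_compose[OF tendsto_power_div_exp_0[where k = 1] this]
  have "((\<lambda>r. (c * r) / exp (c * r)) \<longlongrightarrow> 0) at_top"
    by simp
  then have "((\<lambda>r. inverse c * ((c * r) / exp (c * r))) \<longlongrightarrow> 0) at_top"
    by (rule tendsto_mult_right_zero)
  then show ?thesis
    using \<open>0 < c\<close> by (simp add: exp_minus field_simps)
qed

lemma has_vector_derivative_zero_imp_flat: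
  fixes f :: "real \<Rightarrow> 'b::real_normed_vector"
  assumes "(f has_vector_derivative 0) (at a within S)" and "0 < \<eta>"
  obtains d where "0 < d" and "\<forall>y\<in>S. \<bar>y - a\<bar> < d \<longrightarrow> norm (f y - f a) \<le> \<eta> * \<bar>y - a\<bar>"
proof -
  have "\<exists>d>0. \<forall>y\<in>S. norm (y - a) < d \<longrightarrow> norm (f y - f a - (y - a) *\<^sub>R 0) \<le> \<eta> * norm (y - a)"
    using assms unfolding has_vector_derivative_def has_derivative_within_alt by blast
  then show thesis
    using that by auto
qed

lemma has_vector_derivative_zero_endpoints_imp_flat:
  fixes f :: "real \<Rightarrow> 'b::real_normed_vector"
  assumes "(f has_vector_derivative 0) (at 0 within {0..1})"
    and "(f has_vector_derivative 0) (at 1 within {0..1})" and "0 < \<eta>"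
  obtains \<delta> where "0 < \<delta>" "\<delta> \<le> 1 / 2"
    and "\<forall>s\<in>{0..\<delta>}. norm (f s - f 0) \<le> \<eta> * \<bar>s - 0\<bar>"
    and "\<forall>s\<in>{1-\<delta>..1}. norm (f s - f 1) \<le> \<eta> * \<bar>s - 1\<bar>"
proof -
  obtain d0 where d0: "0 < d0" "\<forall>y\<in>{0..1}. \<bar>y - 0\<bar> < d0 \<longrightarrow> norm (f y - f 0) \<le> \<eta> * \<bar>y - 0\<bar>"
    using has_vector_derivative_zero_imp_flat[OF assms(1,3)] by blast
  obtain d1 where d1: "0 < d1" "\<forall>y\<in>{0..1}. \<bar>y - 1\<bar> < d1 \<longrightarrow> norm (f y - f 1) \<le> \<eta> * \<bar>y - 1\<bar>"
    using has_vector_derivative_zero_imp_flat[OF assms(2,3)] by blast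
  show thesis
    by (rule that[of "min (1 / 2) (min d0 d1 / 2)"]) (use d0 d1 in auto)
qed

lemma has_vector_derivative_scaled_exp:
  fixes \<Psi> :: "real \<Rightarrow> complex"
  assumes "(\<Psi> has_vector_derivative \<Psi>') (at x within S)"
  shows "((\<lambda>x. of_real r * exp (of_real r * \<Psi> x)) has_vector_derivative
      of_real r * (of_real r * \<Psi>' * exp (of_real r * \<Psi> x))) (at x within S)"
proof -
  have "((\<lambda>x. of_real r * \<Psi> x) has_vector_derivative of_real r * \<Psi>') (at x within S)"
    using assms by (rule has_vector_derivative_mult_right)
  then have "((exp \<circ> (\<lambda>x. of_real r * \<Psi> x)) has_vector_derivative
      of_real r * \<Psi>' * exp (of_real r * \<Psi> x)) (at x within S)"
    by (rule field_vector_diff_chain_within) (auto intro: DERIV_subset DERIV_exp)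
  then show ?thesis
    unfolding o_def by (rule has_vector_derivative_mult_right)
qed

lemma has_vector_derivative_partial_snd:
  fixes g :: "'a::real_normed_vector \<times> real \<Rightarrow> 'b::real_normed_vector"
  assumes "(g has_derivative blinfun_apply D) (at (w, x))"
  shows "((\<lambda>x. g (w, x)) has_vector_derivative D (0, 1)) (at x)"
proof -
  have "((\<lambda>x. (w, x)) has_derivative (\<lambda>t. (0, t))) (at x)"
    by (intro derivative_eq_intros) auto
  from diff_chain_at[OF this assms]
  have "((\<lambda>x. g (w, x)) has_derivative (\<lambda>t. D (0, t))) (at x)"
    by (simp add: o_def)
  moreover have "(\<lambda>t. D (0, t)) = (\<lambda>t. t *\<^sub>R D (0, 1))"
  proof
    fix t :: real
    have "(0, t) = t *\<^sub>R ((0::'a), (1::real))"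
      by simp
    then show "D (0, t) = t *\<^sub>R D (0, 1)"
      by (metis blinfun.scaleR_right)
  qed
  ultimately show ?thesis
    unfolding has_vector_derivative_def by (simp only:)
qed

lemma C1_on_set_partial_derivative:
  fixes f :: "'a::real_normed_vector \<Rightarrow> real \<Rightarrow> 'b::real_normed_vector"
  assumes f: "C1_on_set (\<lambda>(w, x). f w x) (A \<times> {a..b})" and "compact A"
  obtains f' C where "\<forall>w\<in>A. \<forall>x\<in>{a..b}. (f w has_vector_derivative f' w x) (at x within {a..b})"
    and "\<forall>w\<in>A. continuous_on {a..b} (f' w)"
    and "\<forall>w\<in>A. \<forall>x\<in>{a..b}. norm (f' w x) \<le> C"
proof -
  obtain U g D where U: "open U" "A \<times> {a..b} \<subseteq> U" and g: "\<forall>z\<in>A \<times> {a..b}. g z = (\<lambda>(w, x). f w x) z"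
    and g_deriv: "\<forall>z\<in>U. (g has_derivative blinfun_apply (D z)) (at z)" and D_cont: "continuous_on U D"
    using f unfolding C1_on_set_def by blast
  define f' where "f' w x = blinfun_apply (D (w, x)) (0, 1)" for w x
  have "(f w has_vector_derivative f' w x) (at x within {a..b})" if "w \<in> A" "x \<in> {a..b}" for w x
  proof -
    have "(w, x) \<in> U"
      using U(2) that by auto
    then have "((\<lambda>x. g (w, x)) has_vector_derivative f' w x) (at x within {a..b})"
      unfolding f'_def using g_deriv
      by (intro has_vector_derivative_at_within[OF has_vector_derivative_partial_snd]) auto
    then show ?thesis
      by (rule has_vector_derivative_transform_within[where d = 1]) (use that g in auto)
  qed
  moreover have "\<forall>w\<in>A. continuous_on {a..b} (f' w)"
    unfolding f'_def using U(2)
    by (auto intro!: continuous_intros continuous_on_compose2[OF D_cont])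
  moreover obtain C where C: "\<forall>z\<in>A \<times> {a..b}. norm (D z) \<le> C"
    using compact_imp_bounded[OF compact_continuous_image[OF continuous_on_subset[OF D_cont U(2)]]]
      compact_Times[OF \<open>compact A\<close> compact_Icc]
    by (auto simp: bounded_iff)
  have "norm (f' w x) \<le> C" if "w \<in> A" "x \<in> {a..b}" for w x
  proof -
    have "norm (f' w x) \<le> norm (D (w, x)) * norm ((0::'a), (1::real))"
      unfolding f'_def by (rule norm_blinfun)
    also have "\<dots> \<le> C"
      using C that by (simp add: norm_Pair)
    finally show ?thesis .
  qed
  ultimately show thesis
    using that by blast
qed

lemma uniform_limit_compose_at_top:
  fixes f :: "'c::linorder \<Rightarrow> 'a \<Rightarrow> 'b::metric_space"
  assumes "uniform_limit A f g at_top" and R: "\<forall>B. \<forall>\<^sub>F t in F. \<forall>w\<in>A. B \<le> R t w"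
  shows "uniform_limit A (\<lambda>t w. f (R t w) w) g F"
proof (rule uniform_limitI)
  fix e :: real assume "0 < e"
  from uniform_limitD[OF assms(1) this] obtain B where B: "\<And>r. B \<le> r \<Longrightarrow> \<forall>w\<in>A. dist (f r w) (g w) < e"
    by (auto simp: eventually_at_top_linorder)
  show "\<forall>\<^sub>F t in F. \<forall>w\<in>A. dist (f (R t w) w) (g w) < e"
    using R[rule_format, of B] by eventually_elim (use B in blast)
qed

lemma tendsto_contour_integral_part_circlepath_zero:
  assumes G: "uniform_limit (path_image (part_circlepath z r s t)) G (\<lambda>_. 0) F"
    and "0 < r" and "s \<le> t"
  shows "((\<lambda>x. contour_integral (part_circlepath z r s t) (G x)) \<longlongrightarrow> 0) F"
proof (rule tendstoI)
  fix e :: real assume "0 < e"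
  define L where "L = r * (t - s)"
  define B where "B = e / (L + 1)"
  have "0 \<le> L"
    using \<open>0 < r\<close> \<open>s \<le> t\<close> by (simp add: L_def)
  then have "0 < B" "B * L < e"
    using \<open>0 < e\<close> by (auto simp: B_def field_simps)
  show "\<forall>\<^sub>F x in F. dist (contour_integral (part_circlepath z r s t) (G x)) 0 < e"
    using uniform_limitD[OF G \<open>0 < B\<close>]
  proof eventually_elim
    case (elim x)
    show ?case
    proof (cases "G x contour_integrable_on part_circlepath z r s t")
      case True
      have "norm (contour_integral (part_circlepath z r s t) (G x)) \<le> B * r * (t - s)"
        using elim \<open>0 < B\<close> \<open>0 < r\<close> \<open>s \<le> t\<close>
        by (intro has_contour_integral_bound_part_circlepath[OF has_contour_integral_integral[OF True]])
          (auto simp: less_imp_le)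
      with \<open>B * L < e\<close> show ?thesis by (simp add: L_def mult.assoc)
    qed (use \<open>0 < e\<close> in \<open>simp add: not_integrable_contour_integral\<close>)
  qed
qed

lemma closed_arc_eq_image: "closed_arc n = cis ` {0..2 * pi / real n}"
  unfolding closed_arc_def by auto

lemma compact_closed_arc: "compact (closed_arc n)"
  unfolding closed_arc_eq_image by (intro compact_continuous_image continuous_intros) auto

lemma path_image_part_circlepath_subset_closed_arc:
  assumes "0 \<le> s" "s \<le> t" "t \<le> 2 * pi / real n"
  shows "path_image (part_circlepath 0 1 s t) \<subseteq> closed_arc n"
  using assms unfolding path_image_part_circlepath' closed_arc_eq_image
  by (auto simp: closed_segment_eq_real_ivl)

section \<open>Integration against the measure \<open>h M\<close>\<close>

lemma cm_dist_eq_integral_indicator: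
  "cm_dist M h s = (LINT x|M. indicator {0..s} x *\<^sub>R h x)"
  unfolding cm_dist_def by (intro Bochner_Integration.integral_cong) (auto simp: indicator_def)

locale polar_measure = finite_measure M for M :: "real measure" +
  fixes h :: "real \<Rightarrow> complex"
  assumes sets_M[measurable_cong]: "sets M = sets borel"
    and h_borel[measurable]: "h \<in> borel_measurable borel"
    and norm_h_le_1: "norm (h x) \<le> 1"
begin

lemma cm_dist_borel[measurable]: "cm_dist M h \<in> borel_measurable borel"
  unfolding cm_dist_def atLeastAtMost_iff by measurable

lemma norm_integral_indicator_mult_le:
  assumes "\<And>x. x \<in> A \<Longrightarrow> norm (\<phi> x) \<le> P" and "0 \<le> P"
  shows "norm (LINT x|M. indicator A x *\<^sub>R (h x * \<phi> x)) \<le> measure M (space M) * P"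
proof (rule norm_integral_le_measure_mult)
  show "norm (indicator A x *\<^sub>R (h x * \<phi> x)) \<le> P" for x
    using assms mult_mono[OF norm_h_le_1 assms(1), of x x]
    by (auto simp: indicator_def norm_mult)
qed

lemma norm_cm_dist_le: "norm (cm_dist M h s) \<le> measure M (space M)"
  using norm_integral_indicator_mult_le[of "{0..s}" "\<lambda>_. 1" 1]
  by (simp add: cm_dist_eq_integral_indicator)

lemma integrable_indicator_mult:
  assumes [measurable]: "A \<in> sets borel" and "A \<subseteq> {u..v}" and "continuous_on {u..v} \<phi>"
  shows "integrable M (\<lambda>x. indicator A x *\<^sub>R (h x * \<phi> x))"
proof -
  obtain P where P: "\<forall>x\<in>{u..v}. norm (\<phi> x) \<le> P"
    using compact_imp_bounded[OF compact_continuous_image[OF assms(3) compact_Icc]]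
    by (auto simp: bounded_iff)
  have [measurable]: "(\<lambda>x. indicator {u..v} x *\<^sub>R \<phi> x) \<in> borel_measurable borel"
    by (rule borel_measurable_continuous_on_indicator[OF _ assms(3)]) simp
  have "(\<lambda>x. indicator A x *\<^sub>R (h x * (indicator {u..v} x *\<^sub>R \<phi> x))) \<in> borel_measurable M"
    by measurable
  also have "(\<lambda>x. indicator A x *\<^sub>R (h x * (indicator {u..v} x *\<^sub>R \<phi> x)))
           = (\<lambda>x. indicator A x *\<^sub>R (h x * \<phi> x))"
    using assms(2) unfolding indicator_def by (auto simp: fun_eq_iff)
  finally have meas: "(\<lambda>x. indicator A x *\<^sub>R (h x * \<phi> x)) \<in> borel_measurable M" .
  have "norm (indicator A x *\<^sub>R (h x * \<phi> x)) \<le> max P 0" for x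
    using P assms(2) mult_mono[OF norm_h_le_1, of "norm (\<phi> x)" P x]
    by (auto simp: indicator_def norm_mult)
  then show ?thesis
    by (intro integrable_const_bound[where B = "max P 0"] AE_I2 meas)
qed

lemma integral_indicator_greaterThanAtMost:
  assumes "0 \<le> u" "u \<le> v"
  shows "(LINT x|M. indicator {u<..v} x *\<^sub>R h x) = cm_dist M h v - cm_dist M h u"
proof -
  have int: "integrable M (\<lambda>x. indicator {0..s} x *\<^sub>R h x)" for s
    using integrable_indicator_mult[of "{0..s}" 0 s "\<lambda>_. 1"] by simp
  have "(LINT x|M. indicator {u<..v} x *\<^sub>R h x)
      = (LINT x|M. indicator {0..v} x *\<^sub>R h x - indicator {0..u} x *\<^sub>R h x)"
    using assms by (intro Bochner_Integration.integral_cong) (auto simp: indicator_def)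
  also have "\<dots> = cm_dist M h v - cm_dist M h u"
    unfolding cm_dist_eq_integral_indicator by (rule Bochner_Integration.integral_diff[OF int int])
  finally show ?thesis .
qed

lemma norm_cm_dist_diff_le:
  assumes "0 \<le> u" "u \<le> v"
  shows "norm (cm_dist M h v - cm_dist M h u) \<le> measure M (space M)"
  using norm_integral_indicator_mult_le[of "{u<..v}" "\<lambda>_. 1" 1]
  by (simp add: integral_indicator_greaterThanAtMost[OF assms])

lemma integrable_indicator_mult_cm_dist:
  assumes "continuous_on {u..v} \<phi>'"
  shows "integrable lborel (\<lambda>s. indicator {u..v} s *\<^sub>R (\<phi>' s * (cm_dist M h s - c)))"
proof -
  obtain K where K: "\<forall>s\<in>{u..v}. norm (\<phi>' s) \<le> K"
    using compact_imp_bounded[OF compact_continuous_image[OF assms compact_Icc]]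
    by (auto simp: bounded_iff)
  have [measurable]: "(\<lambda>s. indicator {u..v} s *\<^sub>R \<phi>' s) \<in> borel_measurable borel"
    by (rule borel_measurable_continuous_on_indicator[OF _ assms]) simp
  have int: "integrable lborel (\<lambda>s. indicator {u..v} s *\<^sub>R ((indicator {u..v} s *\<^sub>R \<phi>' s) * (cm_dist M h s - c)))"
  proof (rule integrableI_bounded_set_indicator[where B = "K * (measure M (space M) + norm c)"])
    show "AE s in lborel. s \<in> {u..v} \<longrightarrow>
        norm ((indicator {u..v} s *\<^sub>R \<phi>' s) * (cm_dist M h s - c)) \<le> K * (measure M (space M) + norm c)"
      using K norm_cm_dist_le
      by (intro AE_I2 impI, unfold norm_mult, intro mult_mono order_trans[OF norm_triangle_ineq4])
        (auto intro: order_trans[OF norm_ge_zero])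
    show "(\<lambda>s. (indicator {u..v} s *\<^sub>R \<phi>' s) * (cm_dist M h s - c)) \<in> borel_measurable lborel"
      by measurable
  qed (auto simp: emeasure_lborel_Icc_eq)
  have "(\<lambda>s. indicator {u..v} s *\<^sub>R ((indicator {u..v} s *\<^sub>R \<phi>' s) * (cm_dist M h s - c)))
      = (\<lambda>s. indicator {u..v} s *\<^sub>R (\<phi>' s * (cm_dist M h s - c)))"
    by (simp add: fun_eq_iff indicator_def)
  with int show ?thesis
    by (simp only:)
qed

lemma integral_swap_lborel:
  fixes \<psi> :: "real \<Rightarrow> complex"
  assumes [measurable]: "S \<in> sets borel" "\<psi> \<in> borel_measurable borel"
    and \<psi>_bound: "\<And>s. norm (\<psi> s) \<le> K" and S_strip: "\<And>x s. (x, s) \<in> S \<Longrightarrow> s \<in> {a..b}"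
  shows "(LINT x|M. LINT s|lborel. indicator S (x, s) *\<^sub>R (h x * \<psi> s))
       = (LINT s|lborel. LINT x|M. indicator S (x, s) *\<^sub>R (h x * \<psi> s))"
proof -
  interpret pair_sigma_finite M lborel
    by (intro pair_sigma_finite.intro sigma_finite_measure_axioms lborel.sigma_finite_measure_axioms)
  have "integrable (M \<Otimes>\<^sub>M lborel) (\<lambda>(x, s). indicator S (x, s) *\<^sub>R (h x * \<psi> s))"
  proof (rule integrableI_bounded_set[where B = K and A = "space M \<times> {a..b}"])
    have "emeasure M (space M) < \<infinity>"
      by (simp add: less_top[symmetric])
    then show "emeasure (M \<Otimes>\<^sub>M lborel) (space M \<times> {a..b}) < \<infinity>"
      by (subst lborel.emeasure_pair_measure_Times) (auto simp: ennreal_mult_less_top emeasure_lborel_Icc_eq)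
    have "norm (indicator S (x, s) *\<^sub>R (h x * \<psi> s)) \<le> K" for x s
      using mult_mono[OF norm_h_le_1 \<psi>_bound] order_trans[OF norm_ge_zero \<psi>_bound]
      by (simp add: indicator_def norm_mult)
    then show "AE z\<in>space M \<times> {a..b} in M \<Otimes>\<^sub>M lborel.
        norm (case z of (x, s) \<Rightarrow> indicator S (x, s) *\<^sub>R (h x * \<psi> s)) \<le> K"
      by auto
    show "AE z in M \<Otimes>\<^sub>M lborel. z \<notin> space M \<times> {a..b} \<longrightarrow>
        (case z of (x, s) \<Rightarrow> indicator S (x, s) *\<^sub>R (h x * \<psi> s)) = 0"
      using S_strip sets_eq_imp_space_eq[OF sets_M] by (intro AE_I2) (auto simp: indicator_def)
  qed measurable
  then show ?thesis
    using Fubini_integral[of "\<lambda>x s. indicator S (x, s) *\<^sub>R (h x * \<psi> s)"] by simp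
qed

lemma integral_endpoint_diff_cm_dist:
  fixes \<phi> \<phi>' :: "real \<Rightarrow> complex"
  assumes uv: "0 \<le> u" "u \<le> v"
    and \<phi>_deriv: "\<And>s. s \<in> {u..v} \<Longrightarrow> (\<phi> has_vector_derivative \<phi>' s) (at s within {u..v})"
    and \<phi>'_cont: "continuous_on {u..v} \<phi>'"
  shows "(LINT x|M. indicator {u<..v} x *\<^sub>R (h x * (\<phi> v - \<phi> x)))
       = (LINT s|lborel. indicator {u..v} s *\<^sub>R (\<phi>' s * (cm_dist M h s - cm_dist M h u)))"
proof -
  define \<psi> where "\<psi> s = indicator {u..v} s *\<^sub>R \<phi>' s" for s
  have \<psi>_borel[measurable]: "\<psi> \<in> borel_measurable borel"
    unfolding \<psi>_def by (rule borel_measurable_continuous_on_indicator[OF _ \<phi>'_cont]) simp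
  obtain K where K: "\<forall>s\<in>{u..v}. norm (\<phi>' s) \<le> K"
    using compact_imp_bounded[OF compact_continuous_image[OF \<phi>'_cont compact_Icc]]
    by (auto simp: bounded_iff)
  have \<psi>_bound: "norm (\<psi> s) \<le> max K 0" for s
    using K by (force simp: \<psi>_def indicator_def)
  \<comment> \<open>Both sides integrate \<open>h(x) \<phi>'(s)\<close> over the triangle \<open>u < x \<le> s \<le> v\<close>.\<close>
  define S where "S = {z :: real \<times> real. u < fst z \<and> fst z \<le> snd z \<and> snd z \<le> v}"
  have "S = {z. u < fst z} \<inter> {z. fst z \<le> snd z \<and> snd z \<le> v}"
    by (auto simp: S_def)
  also have "\<dots> \<in> sets borel"
    by (intro sets.Int borel_open borel_closed open_Collect_less closed_Collect_conj
        closed_Collect_le continuous_intros)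
  finally have S_borel[measurable]: "S \<in> sets borel" .
  have inner_lborel: "(LINT s|lborel. indicator S (x, s) *\<^sub>R (h x * \<psi> s))
      = indicator {u<..v} x *\<^sub>R (h x * (\<phi> v - \<phi> x))" for x
  proof (cases "x \<in> {u<..v}")
    case True
    then have "(LINT s|lborel. indicator S (x, s) *\<^sub>R (h x * \<psi> s))
        = h x * (LINT s|lborel. indicator {x..v} s *\<^sub>R \<phi>' s)"
      by (subst integral_mult_right_zero[symmetric], intro Bochner_Integration.integral_cong)
        (auto simp: S_def \<psi>_def indicator_def)
    also have "(LINT s|lborel. indicator {x..v} s *\<^sub>R \<phi>' s) = \<phi> v - \<phi> x"
      using True by (intro lborel_integral_indicator_derivative)
        (auto intro: has_vector_derivative_within_subset[OF \<phi>_deriv] continuous_on_subset[OF \<phi>'_cont])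
    finally show ?thesis
      using True by simp
  qed (auto simp: S_def)
  have inner_M: "(LINT x|M. indicator S (x, s) *\<^sub>R (h x * \<psi> s))
      = indicator {u..v} s *\<^sub>R (\<phi>' s * (cm_dist M h s - cm_dist M h u))" for s
  proof (cases "s \<in> {u..v}")
    case True
    then have "(LINT x|M. indicator S (x, s) *\<^sub>R (h x * \<psi> s))
        = \<psi> s * (LINT x|M. indicator {u<..s} x *\<^sub>R h x)"
      by (subst integral_mult_right_zero[symmetric], intro Bochner_Integration.integral_cong)
        (auto simp: S_def indicator_def)
    with True uv show ?thesis
      by (simp add: integral_indicator_greaterThanAtMost \<psi>_def)
  qed (auto simp: S_def)
  show ?thesis
    using integral_swap_lborel[OF S_borel \<psi>_borel \<psi>_bound, of u v]
    unfolding inner_lborel inner_M by (auto simp: S_def)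
qed

text \<open>Choosing \<open>c\<close> as the value of \<open>Q\<close> at the endpoint where \<open>Q\<close> is flat removes the boundary
  term there.\<close>

lemma integral_by_parts_cm_dist:
  fixes \<phi> \<phi>' :: "real \<Rightarrow> complex"
  assumes uv: "0 \<le> u" "u \<le> v"
    and \<phi>_deriv: "\<And>s. s \<in> {u..v} \<Longrightarrow> (\<phi> has_vector_derivative \<phi>' s) (at s within {u..v})"
    and \<phi>'_cont: "continuous_on {u..v} \<phi>'"
  shows "(LINT x|M. indicator {u<..v} x *\<^sub>R (h x * \<phi> x))
       = \<phi> v * (cm_dist M h v - c) - \<phi> u * (cm_dist M h u - c)
         - (LINT s|lborel. indicator {u..v} s *\<^sub>R (\<phi>' s * (cm_dist M h s - c)))"
proof -
  let ?Q = "cm_dist M h"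
  let ?I = "\<lambda>c. LINT s|lborel. indicator {u..v} s *\<^sub>R (\<phi>' s * (?Q s - c))"
  have \<phi>_cont: "continuous_on {u..v} \<phi>"
    using \<phi>_deriv by (rule continuous_on_vector_derivative)
  have "integrable M (\<lambda>x. indicator {u<..v} x *\<^sub>R h x)"
    using integrable_indicator_mult[of "{u<..v}" u v "\<lambda>_. 1"] by (simp add: subset_eq)
  then have int_const: "integrable M (\<lambda>x. \<phi> v * (indicator {u<..v} x *\<^sub>R h x))"
    by (rule integrable_mult_right)
  have int_diff: "integrable M (\<lambda>x. indicator {u<..v} x *\<^sub>R (h x * (\<phi> v - \<phi> x)))"
    by (rule integrable_indicator_mult[of _ u v]) (auto intro!: continuous_intros \<phi>_cont)
  have "(LINT x|M. indicator {u<..v} x *\<^sub>R (h x * \<phi> x))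
      = (LINT x|M. \<phi> v * (indicator {u<..v} x *\<^sub>R h x) - indicator {u<..v} x *\<^sub>R (h x * (\<phi> v - \<phi> x)))"
    by (intro Bochner_Integration.integral_cong) (auto simp: algebra_simps)
  also have "\<dots> = \<phi> v * (?Q v - ?Q u) - ?I (?Q u)"
    by (simp only: Bochner_Integration.integral_diff[OF int_const int_diff] integral_mult_right_zero
        integral_indicator_greaterThanAtMost[OF uv] integral_endpoint_diff_cm_dist[OF uv \<phi>_deriv \<phi>'_cont])
  also have "?I (?Q u) = ?I c - (?Q u - c) * (\<phi> v - \<phi> u)"
  proof -
    have "?I (?Q u) = (LINT s|lborel. indicator {u..v} s *\<^sub>R (\<phi>' s * (?Q s - c))
        - (?Q u - c) * (indicator {u..v} s *\<^sub>R \<phi>' s))"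
      by (intro Bochner_Integration.integral_cong) (auto simp: algebra_simps)
    also have "\<dots> = ?I c - (?Q u - c) * (LINT s|lborel. indicator {u..v} s *\<^sub>R \<phi>' s)"
      using borel_integrable_atLeastAtMost'[OF \<phi>'_cont] unfolding set_integrable_def
      by (simp only: Bochner_Integration.integral_diff[OF integrable_indicator_mult_cm_dist[OF \<phi>'_cont]
          integrable_mult_right] integral_mult_right_zero)
    also have "(LINT s|lborel. indicator {u..v} s *\<^sub>R \<phi>' s) = \<phi> v - \<phi> u"
      by (rule lborel_integral_indicator_derivative[OF uv(2) \<phi>_deriv \<phi>'_cont])
    finally show ?thesis .
  qed
  finally show ?thesis
    by (simp add: algebra_simps)
qed

section \<open>Decay of the scaled exponential integrals\<close>

lemma norm_integral_boundary_layer_le: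
  fixes \<phi> \<phi>' :: "real \<Rightarrow> complex"
  assumes uv: "0 \<le> u" "u \<le> v" and e: "e \<in> {u, v}"
    and \<phi>_deriv: "\<And>s. s \<in> {u..v} \<Longrightarrow> (\<phi> has_vector_derivative \<phi>' s) (at s within {u..v})"
    and \<phi>'_cont: "continuous_on {u..v} \<phi>'"
    and "0 < a" and "0 \<le> \<eta>"
    and Q_flat: "\<forall>s\<in>{u..v}. norm (cm_dist M h s - cm_dist M h e) \<le> \<eta> * \<bar>s - e\<bar>"
    and \<phi>'_decay: "\<forall>s\<in>{u..v}. norm (\<phi>' s) \<le> K * exp (- a * \<bar>s - e\<bar>)"
  shows "norm (LINT x|M. indicator {u<..v} x *\<^sub>R (h x * \<phi> x))
    \<le> norm (\<phi> (u + v - e)) * measure M (space M) + K * \<eta> / a\<^sup>2"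
proof -
  let ?Q = "cm_dist M h"
  let ?I = "LINT s|lborel. indicator {u..v} s *\<^sub>R (\<phi>' s * (?Q s - ?Q e))"
  have "0 \<le> K * exp (- a * \<bar>u - e\<bar>)"
    using \<phi>'_decay uv by (auto intro: order_trans[OF norm_ge_zero])
  then have "0 \<le> K" by (simp add: zero_le_mult_iff)
  have "norm ?I \<le> (LINT s|lborel. K * \<eta> * (indicator {u..v} s *\<^sub>R (\<bar>s - e\<bar> * exp (- a * \<bar>s - e\<bar>))))"
  proof (rule norm_integral_le_integral)
    show "integrable lborel (\<lambda>s. K * \<eta> * (indicator {u..v} s *\<^sub>R (\<bar>s - e\<bar> * exp (- a * \<bar>s - e\<bar>))))"
      using borel_integrable_atLeastAtMost'[of u v "\<lambda>s. \<bar>s - e\<bar> * exp (- a * \<bar>s - e\<bar>)"]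
      unfolding set_integrable_def by (intro integrable_mult_right) (simp add: continuous_intros)
    show "norm (indicator {u..v} s *\<^sub>R (\<phi>' s * (?Q s - ?Q e)))
        \<le> K * \<eta> * (indicator {u..v} s *\<^sub>R (\<bar>s - e\<bar> * exp (- a * \<bar>s - e\<bar>)))" for s
      using mult_mono[OF bspec[OF \<phi>'_decay] bspec[OF Q_flat], of s s] \<open>0 \<le> K\<close>
      by (auto simp: indicator_def norm_mult mult_ac)
  qed
  also have "\<dots> \<le> K * \<eta> / a\<^sup>2"
    using lborel_integral_dist_exp_le[OF \<open>0 < a\<close> \<open>u \<le> v\<close> e] \<open>0 \<le> K\<close> \<open>0 \<le> \<eta>\<close>
    by (simp add: mult_left_mono divide_inverse)
  finally have I_bound: "norm ?I \<le> K * \<eta> / a\<^sup>2" .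
  have boundary: "norm (\<phi> v * (?Q v - ?Q e) - \<phi> u * (?Q u - ?Q e))
      \<le> norm (\<phi> (u + v - e)) * measure M (space M)"
    using e mult_left_mono[OF norm_cm_dist_diff_le[OF uv], of "norm (\<phi> (u + v - e))"]
    by (auto simp: norm_mult norm_minus_commute)
  have by_parts: "(LINT x|M. indicator {u<..v} x *\<^sub>R (h x * \<phi> x))
      = (\<phi> v * (?Q v - ?Q e) - \<phi> u * (?Q u - ?Q e)) - ?I"
    by (rule integral_by_parts_cm_dist[OF uv \<phi>_deriv \<phi>'_cont])
  show ?thesis
    unfolding by_parts
    using boundary I_bound norm_triangle_ineq4[of "\<phi> v * (?Q v - ?Q e) - \<phi> u * (?Q u - ?Q e)" ?I]
    by linarith
qed

lemma integral_unit_interval_split: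
  assumes Q0: "cm_dist M h 0 = 0" and \<phi>_cont: "continuous_on {0..1} \<phi>"
    and \<delta>: "0 \<le> \<delta>" "\<delta> \<le> 1 / 2"
  shows "(LINT x|M. indicator {0..1} x *\<^sub>R (h x * \<phi> x))
    = (LINT x|M. indicator {0<..\<delta>} x *\<^sub>R (h x * \<phi> x))
      + (LINT x|M. indicator {\<delta><..1-\<delta>} x *\<^sub>R (h x * \<phi> x))
      + (LINT x|M. indicator {1-\<delta><..1} x *\<^sub>R (h x * \<phi> x))"
proof -
  let ?f = "\<lambda>A x. indicator A x *\<^sub>R (h x * \<phi> x)"
  have int: "integrable M (?f A)" if "A \<in> sets borel" "A \<subseteq> {0..1}" for A
    using integrable_indicator_mult[OF that \<phi>_cont] .
  have "(LINT x|M. ?f {0} x) = (LINT x|M. \<phi> 0 * (indicator {0..0} x *\<^sub>R h x))"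
    by (intro Bochner_Integration.integral_cong) (auto simp: indicator_def)
  also have "\<dots> = 0"
    by (simp only: integral_mult_right_zero cm_dist_eq_integral_indicator[symmetric] Q0 mult_zero_right)
  finally have atom: "(LINT x|M. ?f {0} x) = 0" .
  have "(LINT x|M. ?f {0..1} x)
      = (LINT x|M. ?f {0} x + (?f {0<..\<delta>} x + (?f {\<delta><..1-\<delta>} x + ?f {1-\<delta><..1} x)))"
    using \<delta> by (intro Bochner_Integration.integral_cong) (auto simp: indicator_def)
  also have "integrable M (?f {0})" "integrable M (?f {0<..\<delta>})"
    "integrable M (?f {\<delta><..1-\<delta>})" "integrable M (?f {1-\<delta><..1})"
    using \<delta> by (auto intro!: int)
  ultimately show ?thesis
    by (simp add: Bochner_Integration.integral_add Bochner_Integration.integrable_add atom)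
qed

lemma norm_integral_unit_interval_le:
  fixes \<phi> \<phi>' :: "real \<Rightarrow> complex"
  assumes \<phi>_deriv: "\<And>s. s \<in> {0..1} \<Longrightarrow> (\<phi> has_vector_derivative \<phi>' s) (at s within {0..1})"
    and \<phi>'_cont: "continuous_on {0..1} \<phi>'"
    and \<delta>: "0 < \<delta>" "\<delta> \<le> 1 / 2" and "0 < a" and "0 \<le> \<eta>" and "0 \<le> P"
    and Q0: "cm_dist M h 0 = 0"
    and Q_flat0: "\<forall>s\<in>{0..\<delta>}. norm (cm_dist M h s - cm_dist M h 0) \<le> \<eta> * \<bar>s - 0\<bar>"
    and Q_flat1: "\<forall>s\<in>{1-\<delta>..1}. norm (cm_dist M h s - cm_dist M h 1) \<le> \<eta> * \<bar>s - 1\<bar>"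
    and \<phi>'_decay: "\<forall>s\<in>{0..1}. norm (\<phi>' s) \<le> K * exp (- a * min s (1 - s))"
    and \<phi>_small: "\<forall>s\<in>{\<delta>..1-\<delta>}. norm (\<phi> s) \<le> P"
  shows "norm (LINT x|M. indicator {0..1} x *\<^sub>R (h x * \<phi> x))
    \<le> 3 * (measure M (space M) * P) + 2 * (K * \<eta> / a\<^sup>2)"
proof -
  let ?m = "measure M (space M)"
  let ?f = "\<lambda>A x. indicator A x *\<^sub>R (h x * \<phi> x)"
  have deriv_sub: "(\<phi> has_vector_derivative \<phi>' s) (at s within {u..v})"
    if "{u..v} \<subseteq> {0..1}" "s \<in> {u..v}" for u v s
    using that by (auto intro: has_vector_derivative_within_subset[OF \<phi>_deriv])
  have cont_sub: "continuous_on {u..v} \<phi>'" if "{u..v} \<subseteq> {0..1}" for u v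
    using continuous_on_subset[OF \<phi>'_cont that] .
  have decay: "\<forall>s\<in>{u..v}. norm (\<phi>' s) \<le> K * exp (- a * \<bar>s - e\<bar>)"
    if "e \<in> {0, 1}" "{u..v} \<subseteq> {0..1}" "\<forall>s\<in>{u..v}. \<bar>s - e\<bar> \<le> \<delta>" for u v e
  proof
    fix s assume "s \<in> {u..v}"
    with that have "s \<in> {0..1}" "\<bar>s - e\<bar> \<le> \<delta>" by auto
    with that(1) \<delta> have "s \<in> {0..1}" "min s (1 - s) = \<bar>s - e\<bar>"
      by (auto simp: min_def)
    with \<phi>'_decay show "norm (\<phi>' s) \<le> K * exp (- a * \<bar>s - e\<bar>)" by metis
  qed
  have "norm (LINT x|M. ?f {0<..\<delta>} x) \<le> norm (\<phi> (0 + \<delta> - 0)) * ?m + K * \<eta> / a\<^sup>2"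
    using \<delta> \<open>0 < a\<close> \<open>0 \<le> \<eta>\<close> Q_flat0 decay[of 0 0 \<delta>]
    by (intro norm_integral_boundary_layer_le) (auto intro!: deriv_sub cont_sub)
  then have left: "norm (LINT x|M. ?f {0<..\<delta>} x) \<le> ?m * P + K * \<eta> / a\<^sup>2"
    using \<phi>_small \<delta> mult_right_mono[of "norm (\<phi> \<delta>)" P ?m] by (auto simp: mult.commute)
  have "norm (LINT x|M. ?f {1-\<delta><..1} x) \<le> norm (\<phi> (1 - \<delta> + 1 - 1)) * ?m + K * \<eta> / a\<^sup>2"
    using \<delta> \<open>0 < a\<close> \<open>0 \<le> \<eta>\<close> Q_flat1 decay[of 1 "1 - \<delta>" 1]
    by (intro norm_integral_boundary_layer_le) (auto intro!: deriv_sub cont_sub)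
  then have right: "norm (LINT x|M. ?f {1-\<delta><..1} x) \<le> ?m * P + K * \<eta> / a\<^sup>2"
    using \<phi>_small \<delta> mult_right_mono[of "norm (\<phi> (1 - \<delta>))" P ?m] by (auto simp: mult.commute)
  have middle: "norm (LINT x|M. ?f {\<delta><..1-\<delta>} x) \<le> ?m * P"
    using \<phi>_small \<open>0 \<le> P\<close> by (intro norm_integral_indicator_mult_le) auto
  have "continuous_on {0..1} \<phi>"
    using \<phi>_deriv by (rule continuous_on_vector_derivative)
  then have split: "(LINT x|M. ?f {0..1} x)
      = (LINT x|M. ?f {0<..\<delta>} x) + (LINT x|M. ?f {\<delta><..1-\<delta>} x) + (LINT x|M. ?f {1-\<delta><..1} x)"
    using \<delta> by (intro integral_unit_interval_split[OF Q0]) auto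
  show ?thesis
    unfolding split using left middle right norm_triangle_ineq[of "LINT x|M. ?f {0<..\<delta>} x" "LINT x|M. ?f {\<delta><..1-\<delta>} x"]
      norm_triangle_ineq[of "(LINT x|M. ?f {0<..\<delta>} x) + (LINT x|M. ?f {\<delta><..1-\<delta>} x)"
        "LINT x|M. ?f {1-\<delta><..1} x"]
    by linarith
qed

lemma norm_integral_exp_scaled_le:
  fixes \<Psi> \<Psi>' :: "real \<Rightarrow> complex"
  assumes Q0: "cm_dist M h 0 = 0"
    and \<delta>: "0 < \<delta>" "\<delta> \<le> 1 / 2" and "0 \<le> \<eta>"
    and Q_flat0: "\<forall>s\<in>{0..\<delta>}. norm (cm_dist M h s - cm_dist M h 0) \<le> \<eta> * \<bar>s - 0\<bar>"
    and Q_flat1: "\<forall>s\<in>{1-\<delta>..1}. norm (cm_dist M h s - cm_dist M h 1) \<le> \<eta> * \<bar>s - 1\<bar>"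
    and \<Psi>_deriv: "\<And>x. x \<in> {0..1} \<Longrightarrow> (\<Psi> has_vector_derivative \<Psi>' x) (at x within {0..1})"
    and \<Psi>'_cont: "continuous_on {0..1} \<Psi>'"
    and \<Psi>'_bound: "\<forall>x\<in>{0..1}. norm (\<Psi>' x) \<le> C"
    and "0 < c0" and \<Psi>_re: "\<forall>x\<in>{0..1}. Re (\<Psi> x) \<le> - c0 * min x (1 - x)"
    and "0 < r"
  shows "norm (LINT x|M. indicator {0..1} x *\<^sub>R (h x * (of_real r * exp (of_real r * \<Psi> x))))
    \<le> 3 * (measure M (space M) * (r * exp (- (c0 * \<delta>) * r))) + 2 * (C * \<eta> / c0\<^sup>2)"
proof -
  define \<phi>' where "\<phi>' x = of_real r * (of_real r * \<Psi>' x * exp (of_real r * \<Psi> x))" for x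
  have \<phi>_deriv: "((\<lambda>x. of_real r * exp (of_real r * \<Psi> x)) has_vector_derivative \<phi>' x) (at x within {0..1})"
    if "x \<in> {0..1}" for x
    unfolding \<phi>'_def using \<Psi>_deriv[OF that] by (rule has_vector_derivative_scaled_exp)
  have "continuous_on {0..1} \<Psi>"
    using \<Psi>_deriv by (rule continuous_on_vector_derivative)
  then have \<phi>'_cont: "continuous_on {0..1} \<phi>'"
    unfolding \<phi>'_def using \<Psi>'_cont by (intro continuous_intros)
  have norm_exp: "norm (exp (of_real r * \<Psi> x)) \<le> exp (- (r * c0) * min x (1 - x))"
    if "x \<in> {0..1}" for x
    using mult_left_mono[OF bspec[OF \<Psi>_re that], of r] \<open>0 < r\<close> by (simp add: mult_ac)
  have "0 \<le> C"
    using bspec[OF \<Psi>'_bound, of 0] by (auto intro: order_trans[OF norm_ge_zero])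
  have \<phi>'_decay: "\<forall>s\<in>{0..1}. norm (\<phi>' s) \<le> r\<^sup>2 * C * exp (- (r * c0) * min s (1 - s))"
  proof
    fix s :: real assume s: "s \<in> {0..1}"
    have "norm (\<phi>' s) = r\<^sup>2 * (norm (\<Psi>' s) * norm (exp (of_real r * \<Psi> s)))"
      using \<open>0 < r\<close> by (simp add: \<phi>'_def norm_mult power2_eq_square)
    also have "\<dots> \<le> r\<^sup>2 * (C * exp (- (r * c0) * min s (1 - s)))"
      using \<Psi>'_bound s norm_exp[OF s] \<open>0 \<le> C\<close> by (intro mult_left_mono mult_mono) auto
    finally show "norm (\<phi>' s) \<le> r\<^sup>2 * C * exp (- (r * c0) * min s (1 - s))"
      by (simp add: mult.assoc)
  qed
  have \<phi>_small: "\<forall>s\<in>{\<delta>..1-\<delta>}. norm (of_real r * exp (of_real r * \<Psi> s)) \<le> r * exp (- (c0 * \<delta>) * r)"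
  proof
    fix s :: real assume s: "s \<in> {\<delta>..1-\<delta>}"
    then have "- (r * c0) * min s (1 - s) \<le> - (c0 * \<delta>) * r"
      using \<open>0 < r\<close> \<open>0 < c0\<close> by (simp add: mult_left_mono)
    with norm_exp[of s] s \<delta> \<open>0 < r\<close>
    show "norm (of_real r * exp (of_real r * \<Psi> s)) \<le> r * exp (- (c0 * \<delta>) * r)"
      by (simp add: norm_mult order_trans)
  qed
  have "norm (LINT x|M. indicator {0..1} x *\<^sub>R (h x * (of_real r * exp (of_real r * \<Psi> x))))
      \<le> 3 * (measure M (space M) * (r * exp (- (c0 * \<delta>) * r))) + 2 * (r\<^sup>2 * C * \<eta> / (r * c0)\<^sup>2)"
    using \<delta> \<open>0 < r\<close> \<open>0 < c0\<close> \<open>0 \<le> \<eta>\<close>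
    by (intro norm_integral_unit_interval_le[OF \<phi>_deriv \<phi>'_cont _ _ _ _ _ Q0 Q_flat0 Q_flat1
          \<phi>'_decay \<phi>_small]) auto
  also have "r\<^sup>2 * C * \<eta> / (r * c0)\<^sup>2 = C * \<eta> / c0\<^sup>2"
    using \<open>0 < r\<close> by (simp add: power_mult_distrib)
  finally show ?thesis .
qed

lemma uniform_limit_integral_exp_scaled:
  fixes \<Psi> \<Psi>' :: "'a \<Rightarrow> real \<Rightarrow> complex"
  assumes Q0: "cm_dist M h 0 = 0"
    and Q'0: "(cm_dist M h has_vector_derivative 0) (at 0 within {0..1})"
    and Q'1: "(cm_dist M h has_vector_derivative 0) (at 1 within {0..1})"
    and \<Psi>_deriv: "\<forall>w\<in>A. \<forall>x\<in>{0..1}. (\<Psi> w has_vector_derivative \<Psi>' w x) (at x within {0..1})"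
    and \<Psi>'_cont: "\<forall>w\<in>A. continuous_on {0..1} (\<Psi>' w)"
    and \<Psi>'_bound: "\<forall>w\<in>A. \<forall>x\<in>{0..1}. norm (\<Psi>' w x) \<le> C"
    and "0 < c0"
    and \<Psi>_re: "\<forall>w\<in>A. \<forall>x\<in>{0..1}. Re (\<Psi> w x) \<le> - c0 * min x (1 - x)"
  shows "uniform_limit A
    (\<lambda>r w. LINT x|M. indicator {0..1} x *\<^sub>R (h x * (of_real r * exp (of_real r * \<Psi> w x))))
    (\<lambda>_. 0) at_top"
proof (rule uniform_limitI)
  fix E :: real assume "0 < E"
  let ?m = "measure M (space M)"
  define C' where "C' = max C 0"
  define \<eta> where "\<eta> = E * c0\<^sup>2 / (8 * (C' + 1))"
  have "0 \<le> C'" "0 < \<eta>"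
    using \<open>0 < E\<close> \<open>0 < c0\<close> by (auto simp: C'_def \<eta>_def)
  have \<Psi>'_bound': "\<forall>w\<in>A. \<forall>x\<in>{0..1}. norm (\<Psi>' w x) \<le> C'"
    using \<Psi>'_bound by (fastforce simp: C'_def le_max_iff_disj)
  have layer_term: "2 * (C' * \<eta> / c0\<^sup>2) < E / 2"
  proof -
    have "2 * (C' * \<eta> / c0\<^sup>2) = E / 4 * (C' / (C' + 1))"
      using \<open>0 < c0\<close> \<open>0 \<le> C'\<close> by (simp add: \<eta>_def field_simps add_nonneg_eq_0_iff)
    also have "\<dots> < E / 2"
      using \<open>0 < E\<close> \<open>0 \<le> C'\<close> by (simp add: field_simps add_pos_nonneg)
    finally show ?thesis .
  qed
  obtain \<delta> where \<delta>: "0 < \<delta>" "\<delta> \<le> 1 / 2"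
    and flat0: "\<forall>s\<in>{0..\<delta>}. norm (cm_dist M h s - cm_dist M h 0) \<le> \<eta> * \<bar>s - 0\<bar>"
    and flat1: "\<forall>s\<in>{1-\<delta>..1}. norm (cm_dist M h s - cm_dist M h 1) \<le> \<eta> * \<bar>s - 1\<bar>"
    using has_vector_derivative_zero_endpoints_imp_flat[OF Q'0 Q'1 \<open>0 < \<eta>\<close>] by blast
  have "((\<lambda>r. 3 * (?m * (r * exp (- (c0 * \<delta>) * r)))) \<longlongrightarrow> 0) at_top"
    using \<open>0 < c0\<close> \<delta> by (intro tendsto_mult_right_zero tendsto_mult_exp_neg_at_top) simp
  then have "\<forall>\<^sub>F r in at_top. 3 * (?m * (r * exp (- (c0 * \<delta>) * r))) < E / 2"
    using \<open>0 < E\<close> by (intro order_tendstoD(2)) auto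
  then show "\<forall>\<^sub>F r in at_top. \<forall>w\<in>A. dist (LINT x|M. indicator {0..1} x *\<^sub>R
      (h x * (of_real r * exp (of_real r * \<Psi> w x)))) 0 < E"
    using eventually_gt_at_top[of 0]
  proof eventually_elim
    case (elim r)
    show ?case
    proof
      fix w assume "w \<in> A"
      then have "norm (LINT x|M. indicator {0..1} x *\<^sub>R (h x * (of_real r * exp (of_real r * \<Psi> w x))))
          \<le> 3 * (?m * (r * exp (- (c0 * \<delta>) * r))) + 2 * (C' * \<eta> / c0\<^sup>2)"
        using \<Psi>_deriv \<Psi>'_cont \<Psi>'_bound' \<Psi>_re
        by (intro norm_integral_exp_scaled_le[OF Q0 \<delta>(1,2) less_imp_le[OF \<open>0 < \<eta>\<close>] flat0 flat1 _ _ _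
              \<open>0 < c0\<close> _ elim(2)]) auto
      with elim(1) layer_term show "dist (LINT x|M. indicator {0..1} x *\<^sub>R
          (h x * (of_real r * exp (of_real r * \<Psi> w x)))) 0 < E"
        unfolding dist_norm diff_zero by linarith
    qed
  qed
qed

lemma norm_cm_integral_le:
  assumes "AE x in M. x \<in> {0..1}"
  shows "norm (cm_integral M h (\<lambda>x. \<phi> x * c))
    \<le> norm c * norm (LINT x|M. indicator {0..1} x *\<^sub>R (h x * \<phi> x))"
proof (cases "integrable M (\<lambda>x. \<phi> x * c * h x)")
  case True
  then have [measurable]: "(\<lambda>x. \<phi> x * c * h x) \<in> borel_measurable M"
    by (rule borel_measurable_integrable)
  have "cm_integral M h (\<lambda>x. \<phi> x * c) = (LINT x|M. indicator {0..1} x *\<^sub>R (\<phi> x * c * h x))"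
    unfolding cm_integral_def
  proof (rule integral_cong_AE)
    show "AE x in M. \<phi> x * c * h x = indicator {0..1} x *\<^sub>R (\<phi> x * c * h x)"
      using assms by eventually_elim simp
  qed measurable
  also have "\<dots> = c * (LINT x|M. indicator {0..1} x *\<^sub>R (h x * \<phi> x))"
    by (subst integral_mult_right_zero[symmetric]) (simp add: mult_ac)
  finally show ?thesis
    by (simp add: norm_mult)
qed (simp add: cm_integral_def not_integrable_integral_eq)

lemma uniform_limit_cm_integral_exp_scaled:
  fixes \<Psi> \<Psi>' :: "'a \<Rightarrow> real \<Rightarrow> complex" and R :: "'t \<Rightarrow> 'a \<Rightarrow> real"
  assumes supp: "AE x in M. x \<in> {0..1}"
    and Q0: "cm_dist M h 0 = 0"
    and Q'0: "(cm_dist M h has_vector_derivative 0) (at 0 within {0..1})"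
    and Q'1: "(cm_dist M h has_vector_derivative 0) (at 1 within {0..1})"
    and \<Psi>_deriv: "\<forall>w\<in>A. \<forall>x\<in>{0..1}. (\<Psi> w has_vector_derivative \<Psi>' w x) (at x within {0..1})"
    and \<Psi>'_cont: "\<forall>w\<in>A. continuous_on {0..1} (\<Psi>' w)"
    and \<Psi>'_bound: "\<forall>w\<in>A. \<forall>x\<in>{0..1}. norm (\<Psi>' w x) \<le> C"
    and c0: "0 < c0"
    and \<Psi>_re: "\<forall>w\<in>A. \<forall>x\<in>{0..1}. Re (\<Psi> w x) \<le> - c0 * min x (1 - x)"
    and \<Xi>_bound: "\<forall>t w. norm (\<Xi> t w) \<le> B"
    and R_inf: "\<forall>B. \<forall>\<^sub>F t in F. \<forall>w\<in>A. B \<le> R t w"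
  shows "uniform_limit A
    (\<lambda>t w. cm_integral M h (\<lambda>x. of_real (R t w) * exp (of_real (R t w) * \<Psi> w x) * \<Xi> t w))
    (\<lambda>_. 0) F"
proof -
  define J where "J r w = (LINT x|M. indicator {0..1} x *\<^sub>R (h x * (of_real r * exp (of_real r * \<Psi> w x))))"
    for r w
  have "uniform_limit A J (\<lambda>_. 0) at_top"
    unfolding J_def
    by (rule uniform_limit_integral_exp_scaled[OF Q0 Q'0 Q'1 \<Psi>_deriv \<Psi>'_cont \<Psi>'_bound c0 \<Psi>_re])
  then have "uniform_limit A (\<lambda>t w. J (R t w) w) (\<lambda>_. 0) F"
    using R_inf by (rule uniform_limit_compose_at_top)
  then have "uniform_limit A (\<lambda>t w. B * norm (J (R t w) w)) (\<lambda>w. B * norm (0::complex)) F"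
    by (intro bounded_linear.uniform_limit[OF bounded_linear_mult_right] uniform_limit_norm)
  then have J_R: "uniform_limit A (\<lambda>t w. B * norm (J (R t w) w)) (\<lambda>_. 0) F"
    by simp
  have bound: "norm (cm_integral M h (\<lambda>x. of_real (R t w) * exp (of_real (R t w) * \<Psi> w x) * \<Xi> t w))
      \<le> B * norm (J (R t w) w)" for t w
  proof -
    have "norm (cm_integral M h (\<lambda>x. of_real (R t w) * exp (of_real (R t w) * \<Psi> w x) * \<Xi> t w))
        \<le> norm (\<Xi> t w) * norm (J (R t w) w)"
      unfolding J_def by (rule norm_cm_integral_le[OF supp])
    also have "\<dots> \<le> B * norm (J (R t w) w)"
      using \<Xi>_bound by (intro mult_right_mono) auto
    finally show ?thesis .
  qed
  show ?thesis
    using bound by (intro uniform_limit_null_comparison[OF _ J_R] always_eventually) blast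
qed

end

theorem lemma2p2:
  fixes n :: nat
    and M :: "real measure" and h :: "real \<Rightarrow> complex"
    and \<Xi> :: "complex \<Rightarrow> complex"
    and \<Psi> :: "complex \<Rightarrow> real \<Rightarrow> complex"
    and c0 :: real
    and R :: "'a \<Rightarrow> complex \<Rightarrow> real"
    and F :: "'a filter"
  assumes n: "n \<ge> 3"
    and M_sets: "sets M = sets borel"
    and M_fin: "finite_measure M"
    and M_supp: "emeasure M (UNIV - {0..1}) = 0"
    and h_meas: "h \<in> borel_measurable borel"
    and h_bnd: "\<forall>x. norm (h x) \<le> 1"
    and no_atom0: "cm_point M h 0 = 0"
    and no_atom1: "cm_point M h 1 = 0"
    and Q'0: "(cm_dist M h has_vector_derivative 0) (at 0 within {0..1})"
    and Q'1: "(cm_dist M h has_vector_derivative 0) (at 1 within {0..1})"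
    and \<Xi>_bnd: "\<exists>B. \<forall>z. norm (\<Xi> z) \<le> B"
    and \<Psi>_C1: "C1_on_set (\<lambda>(w, x). \<Psi> w x) (closed_arc n \<times> {0..1})"
    and c0: "c0 > 0"
    and \<Psi>_re: "\<forall>w\<in>closed_arc n. \<forall>x\<in>{0..1}. Re (\<Psi> w x) \<le> - c0 * min x (1 - x)"
    and R_pos: "\<forall>t. \<forall>w\<in>closed_arc n. R t w > 0"
    and R_inf: "\<forall>B. eventually (\<lambda>t. \<forall>w\<in>closed_arc n. R t w \<ge> B) F"
  shows "((\<lambda>t.
      contour_integral (part_circlepath 0 1 0 (pi / real n))
        (\<lambda>w. cm_integral M h (\<lambda>x. of_real (R t w) * exp (of_real (R t w) * \<Psi> w x) * \<Xi> (of_real (R t w) * w)))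
    + contour_integral (part_circlepath 0 1 (pi / real n) (2 * pi / real n))
        (\<lambda>w. cm_integral M h (\<lambda>x. of_real (R t w) * exp (of_real (R t w) * \<Psi> w x) * \<Xi> (of_real (R t w) * w))))
    \<longlongrightarrow> 0) F"
proof -
  interpret polar_measure M h
    using M_fin by (rule polar_measure.intro) (simp add: polar_measure_axioms_def M_sets h_meas h_bnd)
  obtain B where B: "\<forall>z. norm (\<Xi> z) \<le> B"
    using \<Xi>_bnd by blast
  obtain \<Psi>' C
    where "\<forall>w\<in>closed_arc n. \<forall>x\<in>{0..1}. (\<Psi> w has_vector_derivative \<Psi>' w x) (at x within {0..1})"
      and "\<forall>w\<in>closed_arc n. continuous_on {0..1} (\<Psi>' w)"
      and "\<forall>w\<in>closed_arc n. \<forall>x\<in>{0..1}. norm (\<Psi>' w x) \<le> C"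
    using C1_on_set_partial_derivative[OF \<Psi>_C1 compact_closed_arc] by blast
  moreover have "cm_dist M h 0 = 0"
    using no_atom0 by (simp add: cm_dist_def cm_point_def)
  moreover have "AE x in M. x \<in> {0..1}"
    using M_supp by (intro AE_I'[of "UNIV - {0..1}"]) (auto intro: null_setsI)
  ultimately have G: "uniform_limit (closed_arc n) (\<lambda>t w. cm_integral M h
      (\<lambda>x. of_real (R t w) * exp (of_real (R t w) * \<Psi> w x) * \<Xi> (of_real (R t w) * w))) (\<lambda>_. 0) F"
    using B Q'0 Q'1 c0 \<Psi>_re R_inf
    by (intro uniform_limit_cm_integral_exp_scaled[where \<Xi> = "\<lambda>t w. \<Xi> (of_real (R t w) * w)"]) auto
  have "0 \<le> pi / real n" "pi / real n \<le> 2 * pi / real n"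
    using n by (auto simp: field_simps)
  then show ?thesis
    by (intro tendsto_add_zero tendsto_contour_integral_part_circlepath_zero
        uniform_limit_on_subset[OF G path_image_part_circlepath_subset_closed_arc]) auto
qed

end
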